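(* Let $\delta>0$ and consider the boundary value problem $$\phi''(x)-\delta\, e^{-\phi(x)}=0,\quad 0<x<1,\qquad \phi'(0)=0,\qquad \phi(1)=0,$$ for a twice continuously differentiable function $\phi:[0,1]\to\mathbb{R}$. Let $\delta_c\approx 0.878$ be the unique positive number satisfying $$1=\sqrt{\frac{\delta_c}{2}}\,\sinh\!\left(\sqrt{\frac{\delta_c+2}{2}}\right).$$ Then the problem has exactly two solutions if $0<\delta<\delta_c$, exactly one solution if $\delta=\delta_c$, and no solution if $\delta>\delta_c$. Every solution has the form $\phi(x)=\phi_0+2\ln\cosh\!\left(\sqrt{\tfrac{\delta}{2}}\,e^{-\phi_0/2}x\right)$, where $\phi_0=\phi(0)$ satisfies $e^{-\phi_0/2}=\cosh\!\left(\sqrt{\tfrac{\delta}{2}}\,e^{-\phi_0/2}\right)$.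
   Context: This is the non-dimensionalized steady-state equation for the liquid (ionic) potential in a one-dimensional molten carbonate fuel cell cathode, with the solid potential, porosity and gas concentrations taken constant, so that $\delta=\frac{\nu L^2}{\sigma_l\epsilon_l^b}\frac{RT}{n\alpha F}i_0 c_{O_2}c_{CO_2}e^{\bar\phi_s}$ is inversely proportional to the liquid conductivity $\sigma_l$; the condition $\phi'(0)=0$ is a no-flux condition and $\phi(1)=0$ a Dirichlet condition. Consequently, for sufficiently small liquid conductivity no steady state exists. *)

theory Defs
  imports Complex_Main
begin

definition is_solution :: "real \<Rightarrow> (real \<Rightarrow> real) \<Rightarrow> bool" where
  "is_solution \<delta> \<phi> \<longleftrightarrow>
     (\<exists>\<phi>1 \<phi>2.
        (\<forall>x\<in>{0..1}. (\<phi> has_real_derivative \<phi>1 x) (at x within {0..1})) \<and>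
        (\<forall>x\<in>{0..1}. (\<phi>1 has_real_derivative \<phi>2 x) (at x within {0..1})) \<and>
        continuous_on {0..1} \<phi>2 \<and>
        (\<forall>x\<in>{0<..<1}. \<phi>2 x - \<delta> * exp (- \<phi> x) = 0) \<and>
        \<phi>1 0 = 0 \<and> \<phi> 1 = 0)"

text \<open>Solutions are functions on [0,1]; we normalise them to be 0 outside [0,1]
so that distinct solutions correspond to distinct functions on [0,1].\<close>
definition solutions :: "real \<Rightarrow> (real \<Rightarrow> real) set" where
  "solutions \<delta> = {\<phi>. is_solution \<delta> \<phi> \<and> (\<forall>x. x \<notin> {0..1} \<longrightarrow> \<phi> x = 0)}"

definition delta_c :: real where
  "delta_c = (THE d. d > 0 \<and> 1 = sqrt (d / 2) * sinh (sqrt ((d + 2) / 2)))"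

end

theory Submission
  imports Defs "HOL-Analysis.Analysis"
begin

text \<open>The energy \<open>\<phi>'^2/2 + \<delta> exp(-\<phi>)\<close> is conserved, and \<open>\<phi>'(0) = 0\<close> fixes it at
\<open>\<delta> exp(-\<phi>\<^sub>0)\<close>. Hence \<open>y = exp((\<phi> - \<phi>\<^sub>0)/2)\<close> solves \<open>y'' = a^2 y\<close>, \<open>y(0) = 1\<close>,
\<open>y'(0) = 0\<close> with \<open>a = sqrt(\<delta>/2) exp(-\<phi>\<^sub>0/2)\<close>, so \<open>y = cosh(a x)\<close> and
\<open>\<phi> = \<phi>\<^sub>0 + 2 ln cosh(a x)\<close>. The condition \<open>\<phi>(1) = 0\<close> becomes \<open>a / cosh a = sqrt(\<delta>/2)\<close>,
and distinct roots \<open>a > 0\<close> give distinct solutions. The map \<open>a \<mapsto> a / cosh a\<close> increases up to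
the unique positive root \<open>a\<^sub>c\<close> of \<open>cosh a = a sinh a\<close> and then decreases to \<open>0\<close>; its maximum
\<open>1 / sinh a\<^sub>c\<close> equals \<open>sqrt(\<delta>\<^sub>c/2)\<close> because \<open>a\<^sub>c^2 = (\<delta>\<^sub>c + 2)/2\<close>.\<close>

subsection \<open>Closed form of the solutions\<close>

lemma first_order_cosh_system:
  fixes y s :: "real \<Rightarrow> real"
  assumes "convex S" "0 \<in> S" "x \<in> S"
    and dy: "\<And>x. x \<in> S \<Longrightarrow> (y has_real_derivative a * s x) (at x within S)"
    and ds: "\<And>x. x \<in> S \<Longrightarrow> (s has_real_derivative a * y x) (at x within S)"
  shows "y x = y 0 * cosh (a * x) + s 0 * sinh (a * x)"
proof -
  have dexp: "((\<lambda>x. exp (c * x)) has_real_derivative exp (c * x) * c) (at x within S)" for c x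
    by (auto intro!: derivative_eq_intros)
  have "((\<lambda>x. (y x + s x) * exp (- a * x)) has_real_derivative 0) (at x within S)"
    if "x \<in> S" for x
  proof -
    have "((\<lambda>x. (y x + s x) * exp (- a * x)) has_real_derivative
        (a * s x + a * y x) * exp (- a * x) + exp (- a * x) * (- a) * (y x + s x)) (at x within S)"
      by (intro DERIV_mult DERIV_add dy ds that dexp)
    then show ?thesis by (simp add: algebra_simps)
  qed
  from has_field_derivative_zero_constant[OF \<open>convex S\<close> this]
  obtain k1 where k1: "\<And>x. x \<in> S \<Longrightarrow> (y x + s x) * exp (- a * x) = k1"
    by blast
  have "((\<lambda>x. (y x - s x) * exp (a * x)) has_real_derivative 0) (at x within S)"
    if "x \<in> S" for x
  proof -
    have "((\<lambda>x. (y x - s x) * exp (a * x)) has_real_derivative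
        (a * s x - a * y x) * exp (a * x) + exp (a * x) * a * (y x - s x)) (at x within S)"
      by (intro DERIV_mult DERIV_diff dy ds that dexp)
    then show ?thesis by (simp add: algebra_simps)
  qed
  from has_field_derivative_zero_constant[OF \<open>convex S\<close> this]
  obtain k2 where k2: "\<And>x. x \<in> S \<Longrightarrow> (y x - s x) * exp (a * x) = k2"
    by blast
  have "y x + s x = (y 0 + s 0) * exp (a * x)"
    using k1[OF \<open>x \<in> S\<close>] k1[OF \<open>0 \<in> S\<close>] by (simp add: field_simps exp_minus)
  moreover have "y x - s x = (y 0 - s 0) * exp (- (a * x))"
    using k2[OF \<open>x \<in> S\<close>] k2[OF \<open>0 \<in> S\<close>] by (simp add: field_simps exp_minus)
  ultimately show ?thesis
    by (simp add: cosh_field_def sinh_field_def field_simps)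
qed

lemma is_solution_closed_ode:
  assumes "is_solution \<delta> \<phi>"
  obtains \<phi>1 where
    "\<And>x. x \<in> {0..1} \<Longrightarrow> (\<phi> has_real_derivative \<phi>1 x) (at x within {0..1})"
    "\<And>x. x \<in> {0..1} \<Longrightarrow> (\<phi>1 has_real_derivative \<delta> * exp (- \<phi> x)) (at x within {0..1})"
    "\<phi>1 0 = 0" "\<phi> 1 = 0"
proof -
  obtain \<phi>1 \<phi>2 where
    d1: "\<And>x. x \<in> {0..1} \<Longrightarrow> (\<phi> has_real_derivative \<phi>1 x) (at x within {0..1})"
    and d2: "\<And>x. x \<in> {0..1} \<Longrightarrow> (\<phi>1 has_real_derivative \<phi>2 x) (at x within {0..1})"
    and "continuous_on {0..1} \<phi>2"
    and ode: "\<And>x. x \<in> {0<..<1} \<Longrightarrow> \<phi>2 x - \<delta> * exp (- \<phi> x) = 0"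
    and "\<phi>1 0 = 0" "\<phi> 1 = 0"
    using assms unfolding is_solution_def by blast
  have "continuous_on {0..1} \<phi>"
    using d1 by (meson DERIV_continuous continuous_on_eq_continuous_within)
  with \<open>continuous_on {0..1} \<phi>2\<close>
  have "continuous_on (closure {0<..<1}) (\<lambda>x. \<phi>2 x - \<delta> * exp (- \<phi> x))"
    by (auto intro!: continuous_intros)
  from continuous_constant_on_closure[OF this ode]
  have \<phi>2_eq: "\<phi>2 x = \<delta> * exp (- \<phi> x)" if "x \<in> {0..1}" for x
    using that by simp
  have ode_closed: "(\<phi>1 has_real_derivative \<delta> * exp (- \<phi> x)) (at x within {0..1})"
    if "x \<in> {0..1}" for x
    using d2[OF that] \<phi>2_eq[OF that] by simp
  show thesis by (rule that[OF d1 ode_closed \<open>\<phi>1 0 = 0\<close> \<open>\<phi> 1 = 0\<close>])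
qed

lemma exp_neg_ode_energy:
  fixes \<phi> \<phi>1 :: "real \<Rightarrow> real"
  assumes "convex S" "0 \<in> S" "x \<in> S" "\<phi>1 0 = 0"
    and d1: "\<And>x. x \<in> S \<Longrightarrow> (\<phi> has_real_derivative \<phi>1 x) (at x within S)"
    and d2: "\<And>x. x \<in> S \<Longrightarrow> (\<phi>1 has_real_derivative \<delta> * exp (- \<phi> x)) (at x within S)"
  shows "\<phi>1 x ^ 2 / 2 + \<delta> * exp (- \<phi> x) = \<delta> * exp (- \<phi> 0)"
proof -
  have "((\<lambda>x. \<phi>1 x ^ 2 / 2 + \<delta> * exp (- \<phi> x)) has_real_derivative 0) (at x within S)"
    if "x \<in> S" for x
  proof -
    have "((\<lambda>x. \<phi>1 x ^ 2 / 2 + \<delta> * exp (- \<phi> x)) has_real_derivative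
        \<phi>1 x * (\<delta> * exp (- \<phi> x)) + \<delta> * (exp (- \<phi> x) * (- \<phi>1 x))) (at x within S)"
      by (rule derivative_eq_intros d1 d2 that refl | simp)+
    then show ?thesis by (simp add: algebra_simps)
  qed
  from has_field_derivative_zero_constant[OF \<open>convex S\<close> this]
  obtain E where "\<And>x. x \<in> S \<Longrightarrow> \<phi>1 x ^ 2 / 2 + \<delta> * exp (- \<phi> x) = E"
    by blast
  from this[OF \<open>x \<in> S\<close>] this[OF \<open>0 \<in> S\<close>] \<open>\<phi>1 0 = 0\<close> show ?thesis by simp
qed

lemma exp_neg_ode_closed_form:
  fixes \<phi> \<phi>1 :: "real \<Rightarrow> real"
  assumes "\<delta> > 0" "convex S" "0 \<in> S" "x \<in> S" "\<phi>1 0 = 0"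
    and d1: "\<And>x. x \<in> S \<Longrightarrow> (\<phi> has_real_derivative \<phi>1 x) (at x within S)"
    and d2: "\<And>x. x \<in> S \<Longrightarrow> (\<phi>1 has_real_derivative \<delta> * exp (- \<phi> x)) (at x within S)"
  shows "\<phi> x = \<phi> 0 + 2 * ln (cosh (sqrt (\<delta> / 2) * exp (- \<phi> 0 / 2) * x))"
proof -
  define a where "a = sqrt (\<delta> / 2) * exp (- \<phi> 0 / 2)"
  have "a > 0" unfolding a_def using \<open>\<delta> > 0\<close> by simp
  have a2: "2 * a ^ 2 = \<delta> * exp (- \<phi> 0)"
    unfolding a_def using \<open>\<delta> > 0\<close>
    by (simp add: power_mult_distrib exp_double[symmetric] power2_eq_square[symmetric]
        flip: exp_add)
  define y where "y x = exp ((\<phi> x - \<phi> 0) / 2)" for x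
  \<comment> \<open>\<open>s = y'/a\<close>; the conserved energy is exactly what makes \<open>s' = a y\<close>\<close>
  define s where "s x = y x * \<phi>1 x / (2 * a)" for x
  have dy: "(y has_real_derivative a * s x) (at x within S)" if "x \<in> S" for x
  proof -
    have "(y has_real_derivative y x * (\<phi>1 x / 2)) (at x within S)"
      unfolding y_def by (auto intro!: derivative_eq_intros d1 that)
    then show ?thesis using \<open>a > 0\<close> unfolding s_def by (simp add: field_simps)
  qed
  have ds: "(s has_real_derivative a * y x) (at x within S)" if "x \<in> S" for x
  proof -
    have "((\<lambda>x. y x * \<phi>1 x / (2 * a)) has_real_derivative
        (a * s x * \<phi>1 x + \<delta> * exp (- \<phi> x) * y x) / (2 * a)) (at x within S)"
      using DERIV_cdivide[OF DERIV_mult[OF dy[OF that] d2[OF that]], of "2 * a"] by simp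
    then have "(s has_real_derivative (a * s x * \<phi>1 x + \<delta> * exp (- \<phi> x) * y x) / (2 * a))
        (at x within S)"
      unfolding s_def[abs_def] .
    also have "(a * s x * \<phi>1 x + \<delta> * exp (- \<phi> x) * y x) / (2 * a)
        = y x * (\<phi>1 x ^ 2 / 2 + \<delta> * exp (- \<phi> x)) / (2 * a)"
      using \<open>a > 0\<close> unfolding s_def by (simp add: field_simps power2_eq_square)
    also have "\<dots> = a * y x"
      using exp_neg_ode_energy[OF assms(2,3) that assms(5) d1 d2] a2 \<open>a > 0\<close>
      by (simp add: field_simps power2_eq_square)
    finally show ?thesis .
  qed
  have "y x = cosh (a * x)"
    using first_order_cosh_system[OF assms(2-4) dy ds] \<open>\<phi>1 0 = 0\<close>
    unfolding s_def y_def by simp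
  moreover have "ln (y x) = (\<phi> x - \<phi> 0) / 2" unfolding y_def by simp
  ultimately show ?thesis unfolding a_def by simp
qed

lemma solution_closed_form:
  assumes "\<delta> > 0" "is_solution \<delta> \<phi>"
  shows "\<forall>x\<in>{0..1}. \<phi> x = \<phi> 0 + 2 * ln (cosh (sqrt (\<delta> / 2) * exp (- \<phi> 0 / 2) * x))"
    and "exp (- \<phi> 0 / 2) = cosh (sqrt (\<delta> / 2) * exp (- \<phi> 0 / 2))"
proof -
  obtain \<phi>1 where
    d1: "\<And>x. x \<in> {0..1} \<Longrightarrow> (\<phi> has_real_derivative \<phi>1 x) (at x within {0..1})"
    and d2: "\<And>x. x \<in> {0..1} \<Longrightarrow> (\<phi>1 has_real_derivative \<delta> * exp (- \<phi> x)) (at x within {0..1})"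
    and "\<phi>1 0 = 0" "\<phi> 1 = 0"
    using is_solution_closed_ode[OF assms(2)] by blast
  have closed: "\<phi> x = \<phi> 0 + 2 * ln (cosh (sqrt (\<delta> / 2) * exp (- \<phi> 0 / 2) * x))"
    if "x \<in> {0..1}" for x
    by (rule exp_neg_ode_closed_form[OF \<open>\<delta> > 0\<close> _ _ that \<open>\<phi>1 0 = 0\<close> d1 d2]) auto
  then show "\<forall>x\<in>{0..1}. \<phi> x = \<phi> 0 + 2 * ln (cosh (sqrt (\<delta> / 2) * exp (- \<phi> 0 / 2) * x))"
    by blast
  have "\<phi> 0 + 2 * ln (cosh (sqrt (\<delta> / 2) * exp (- \<phi> 0 / 2))) = 0"
    using closed[of 1] \<open>\<phi> 1 = 0\<close> by simp
  then have "ln (cosh (sqrt (\<delta> / 2) * exp (- \<phi> 0 / 2))) = - \<phi> 0 / 2" by linarith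
  then have "exp (- \<phi> 0 / 2) = exp (ln (cosh (sqrt (\<delta> / 2) * exp (- \<phi> 0 / 2))))"
    by (simp only:)
  then show "exp (- \<phi> 0 / 2) = cosh (sqrt (\<delta> / 2) * exp (- \<phi> 0 / 2))"
    by simp
qed

subsection \<open>The critical point of \<open>a / cosh a\<close>\<close>

lemma cosh_minus_mult_sinh_strict_antimono:
  fixes x y :: real
  assumes "0 \<le> x" "x < y"
  shows "cosh y - y * sinh y < cosh x - x * sinh x"
proof -
  have "((\<lambda>t. cosh t - t * sinh t) has_real_derivative - t * cosh t) (at t)" for t :: real
    by (auto intro!: derivative_eq_intros)
  moreover have "- t * cosh t < 0" if "x < t" for t
    using that assms by (simp add: mult_pos_pos)
  ultimately show ?thesis
    using DERIV_neg_imp_decreasing_open[OF \<open>x < y\<close>, of "\<lambda>t. cosh t - t * sinh t"]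
    by (force intro!: continuous_intros)
qed

definition a_crit :: real where
  "a_crit = (THE a. a > 0 \<and> cosh a = a * sinh a)"

lemma cosh_eq_mult_sinh_ex1: "\<exists>!a::real. a > 0 \<and> cosh a = a * sinh a"
proof -
  have "cosh 1 - 1 * sinh 1 > (0::real)"
    using cosh_minus_sinh[of "1::real"] by simp
  moreover have "cosh 2 - 2 * sinh 2 < (0::real)"
  proof -
    have "exp (2::real) * exp 2 \<ge> 5"
      using exp_ge_add_one_self[of "4::real"] by (simp flip: exp_add)
    then show ?thesis by (simp add: cosh_field_def sinh_field_def exp_minus field_simps)
  qed
  ultimately obtain a :: real where a: "1 \<le> a" "a \<le> 2" "cosh a - a * sinh a = 0"
    using IVT2'[of "\<lambda>t::real. cosh t - t * sinh t" 2 0 1] by (force intro!: continuous_intros)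
  show ?thesis
  proof (rule ex1I[of _ a])
    fix b :: real assume b: "b > 0 \<and> cosh b = b * sinh b"
    show "b = a"
      using cosh_minus_mult_sinh_strict_antimono[of b a]
        cosh_minus_mult_sinh_strict_antimono[of a b] a b
      by (cases b a rule: linorder_cases) auto
  qed (use a in auto)
qed

lemma a_crit: "a_crit > 0" "cosh a_crit = a_crit * sinh a_crit"
  using theI'[OF cosh_eq_mult_sinh_ex1] unfolding a_crit_def by auto

lemma a_crit_gt_1: "a_crit > 1"
proof (rule ccontr)
  assume "\<not> a_crit > 1"
  then have "cosh 1 - 1 * sinh 1 \<le> cosh a_crit - a_crit * sinh a_crit"
    using cosh_minus_mult_sinh_strict_antimono[of a_crit 1] a_crit(1)
    by (cases "a_crit = 1") auto
  then show False using a_crit(2) cosh_minus_sinh[of "1::real"] by simp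
qed

lemma delta_c_equation_iff:
  "d > 0 \<and> 1 = sqrt (d / 2) * sinh (sqrt ((d + 2) / 2)) \<longleftrightarrow> d = 2 * a_crit ^ 2 - 2"
proof
  assume d: "d > 0 \<and> 1 = sqrt (d / 2) * sinh (sqrt ((d + 2) / 2))"
  define b where "b = sqrt ((d + 2) / 2)"
  have "b > 1" unfolding b_def using d by (simp add: real_less_rsqrt)
  have b2: "b ^ 2 = (d + 2) / 2" unfolding b_def using d by simp
  have "d / 2 = b ^ 2 - 1" using b2 by simp
  moreover have "1 = sqrt (d / 2) * sinh b" using d unfolding b_def by blast
  ultimately have "1 = sqrt (b ^ 2 - 1) * sinh b" by (simp only:)
  then have "1 = (sqrt (b ^ 2 - 1) * sinh b) ^ 2" by simp
  also have "\<dots> = (b ^ 2 - 1) * sinh b ^ 2"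
    using \<open>b > 1\<close> by (simp add: power_mult_distrib one_less_power)
  finally have "(b * sinh b) ^ 2 = cosh b ^ 2"
    using cosh_square_eq[of b] by (simp add: power_mult_distrib algebra_simps)
  moreover have "b * sinh b \<ge> 0" using \<open>b > 1\<close> by simp
  ultimately have "cosh b = b * sinh b"
    using power2_eq_iff_nonneg[of "b * sinh b" "cosh b"] by simp
  then have "a_crit = b"
    using the1_equality[OF cosh_eq_mult_sinh_ex1] \<open>b > 1\<close> unfolding a_crit_def by simp
  then show "d = 2 * a_crit ^ 2 - 2" using b2 by simp
next
  assume d: "d = 2 * a_crit ^ 2 - 2"
  then have half_d: "d / 2 = a_crit ^ 2 - 1" and "sqrt ((d + 2) / 2) = a_crit"
    using a_crit_gt_1 by simp_all
  have "sqrt (d / 2) * sinh a_crit = sqrt ((a_crit ^ 2 - 1) * sinh a_crit ^ 2)"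
    unfolding half_d using a_crit(1) by (simp add: real_sqrt_mult)
  also have "\<dots> = 1"
    using a_crit(2) cosh_square_eq[of a_crit] by (simp add: power_mult_distrib algebra_simps)
  finally show "d > 0 \<and> 1 = sqrt (d / 2) * sinh (sqrt ((d + 2) / 2))"
    using \<open>sqrt ((d + 2) / 2) = a_crit\<close> d a_crit_gt_1 by (simp add: one_less_power)
qed

lemma delta_c_eq: "delta_c = 2 * a_crit ^ 2 - 2"
  unfolding delta_c_def using delta_c_equation_iff by simp

subsection \<open>The shooting map \<open>a \<mapsto> a / cosh a\<close>\<close>

definition shoot :: "real \<Rightarrow> real" where
  "shoot a = a / cosh a"

lemma continuous_on_shoot: "continuous_on S shoot"
  unfolding shoot_def by (auto intro!: continuous_intros)

lemma shoot_deriv: "(shoot has_real_derivative (cosh t - t * sinh t) / cosh t ^ 2) (at t)"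
  unfolding shoot_def by (auto intro!: derivative_eq_intros simp: power2_eq_square)

lemma shoot_strict_mono_below_a_crit:
  assumes "0 \<le> x" "x < y" "y \<le> a_crit"
  shows "shoot x < shoot y"
proof -
  have "(cosh t - t * sinh t) / cosh t ^ 2 > 0" if "x < t" "t < y" for t
    using cosh_minus_mult_sinh_strict_antimono[of t a_crit] a_crit(2) that assms by simp
  then show ?thesis
    using DERIV_pos_imp_increasing_open[OF \<open>x < y\<close> _ continuous_on_shoot] shoot_deriv by blast
qed

lemma shoot_strict_antimono_above_a_crit:
  assumes "a_crit \<le> x" "x < y"
  shows "shoot y < shoot x"
proof -
  have "(cosh t - t * sinh t) / cosh t ^ 2 < 0" if "x < t" "t < y" for t
    using cosh_minus_mult_sinh_strict_antimono[of a_crit t] a_crit that assms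
    by (simp add: divide_neg_pos)
  then show ?thesis
    using DERIV_neg_imp_decreasing_open[OF \<open>x < y\<close> _ continuous_on_shoot] shoot_deriv by blast
qed

lemma shoot_lt_max: "0 \<le> a \<Longrightarrow> a \<noteq> a_crit \<Longrightarrow> shoot a < shoot a_crit"
  using shoot_strict_mono_below_a_crit[of a a_crit] shoot_strict_antimono_above_a_crit[of a_crit a]
  by (cases "a < a_crit") auto

lemma shoot_max: "shoot a_crit = sqrt (delta_c / 2)"
proof -
  have "sqrt ((delta_c + 2) / 2) = a_crit" unfolding delta_c_eq using a_crit_gt_1 by simp
  then have "1 = sqrt (delta_c / 2) * sinh a_crit"
    using delta_c_equation_iff[of delta_c] delta_c_eq by simp
  moreover have "sinh a_crit > 0" using a_crit(1) by simp
  ultimately have "sqrt (delta_c / 2) = 1 / sinh a_crit" by (simp add: field_simps)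
  moreover have "shoot a_crit = 1 / sinh a_crit"
    unfolding shoot_def using a_crit by simp
  ultimately show ?thesis by simp
qed

lemma shoot_tendsto_0: "(shoot \<longlongrightarrow> 0) at_top"
proof (rule tendsto_sandwich)
  show "\<forall>\<^sub>F b in at_top. 0 \<le> shoot b"
    using eventually_ge_at_top[of 0] by eventually_elim (simp add: shoot_def)
  show "\<forall>\<^sub>F b in at_top. shoot b \<le> 2 * (b ^ 1 / exp b)"
  proof (rule eventually_mono[OF eventually_ge_at_top[of 0]])
    fix b :: real assume "0 \<le> b"
    have "exp b / 2 \<le> cosh b"
      unfolding cosh_field_def by (intro divide_right_mono) auto
    then have "b / cosh b \<le> b / (exp b / 2)"
      using \<open>0 \<le> b\<close> by (intro divide_left_mono) auto
    then show "shoot b \<le> 2 * (b ^ 1 / exp b)"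
      unfolding shoot_def by (simp add: mult.commute)
  qed
  show "((\<lambda>b::real. 2 * (b ^ 1 / exp b)) \<longlongrightarrow> 0) at_top"
    using tendsto_mult_right_zero[OF tendsto_power_div_exp_0] .
qed (rule tendsto_const)

lemma shoot_level_set_below_max:
  assumes "0 < c" "c < shoot a_crit"
  shows "card {a. a > 0 \<and> shoot a = c} = 2"
proof -
  have "shoot 0 = 0" unfolding shoot_def by simp
  then obtain a1 where a1: "0 \<le> a1" "a1 \<le> a_crit" "shoot a1 = c"
    using IVT'[of shoot 0 c a_crit] assms a_crit(1) continuous_on_shoot by force
  then have "0 < a1" "a1 < a_crit"
    using assms \<open>shoot 0 = 0\<close> by (auto simp: order.order_iff_strict)
  have "\<forall>\<^sub>F b in at_top. shoot b < c \<and> a_crit < b"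
    using order_tendstoD(2)[OF shoot_tendsto_0 \<open>0 < c\<close>] eventually_gt_at_top
    by (rule eventually_conj)
  then obtain b where "b > a_crit" "shoot b < c"
    unfolding eventually_at_top_linorder by blast
  then obtain a2 where a2: "a_crit \<le> a2" "shoot a2 = c"
    using IVT2'[of shoot b c a_crit] assms continuous_on_shoot by force
  then have "a_crit < a2" using assms by (auto simp: order.order_iff_strict)
  have "{a. a > 0 \<and> shoot a = c} = {a1, a2}"
  proof (intro equalityI subsetI)
    fix a assume "a \<in> {a. a > 0 \<and> shoot a = c}"
    then have a: "a > 0" "shoot a = c" by auto
    show "a \<in> {a1, a2}"
    proof (cases "a \<le> a_crit")
      case True
      then show ?thesis
        using shoot_strict_mono_below_a_crit[of a a1] shoot_strict_mono_below_a_crit[of a1 a] a a1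
        by (cases a a1 rule: linorder_cases) auto
    next
      case False
      then show ?thesis
        using shoot_strict_antimono_above_a_crit[of a a2]
          shoot_strict_antimono_above_a_crit[of a2 a] a a2
        by (cases a a2 rule: linorder_cases) auto
    qed
  qed (use a1 a2 \<open>0 < a1\<close> \<open>a_crit < a2\<close> a_crit(1) in auto)
  then show ?thesis using \<open>a1 < a_crit\<close> \<open>a_crit < a2\<close> by simp
qed

lemma shoot_level_set_max: "{a. a > 0 \<and> shoot a = shoot a_crit} = {a_crit}"
proof -
  have "a = a_crit" if "a > 0" "shoot a = shoot a_crit" for a
    using shoot_lt_max[of a] that by fastforce
  then show ?thesis using a_crit(1) by blast
qed

lemma shoot_level_set_above_max:
  assumes "shoot a_crit < c"
  shows "{a. a > 0 \<and> shoot a = c} = {}"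
proof (rule equals0I)
  fix a assume "a \<in> {a. a > 0 \<and> shoot a = c}"
  then have "a > 0" "shoot a = c" by auto
  moreover have "shoot a \<le> shoot a_crit"
    using shoot_lt_max[of a] \<open>a > 0\<close> by (cases "a = a_crit") auto
  ultimately show False using assms by simp
qed

subsection \<open>Solutions as a family of profiles\<close>

definition profile :: "real \<Rightarrow> real \<Rightarrow> real" where
  "profile a x = (if x \<in> {0..1} then 2 * ln (cosh (a * x)) - 2 * ln (cosh a) else 0)"

lemma profile_in_solutions:
  assumes "\<delta> > 0" "shoot a = sqrt (\<delta> / 2)"
  shows "profile a \<in> solutions \<delta>"
proof -
  define \<phi>1 where "\<phi>1 x = 2 * a * sinh (a * x) / cosh (a * x)" for x
  define \<phi>2 where "\<phi>2 x = 2 * a ^ 2 / cosh (a * x) ^ 2" for x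
  have d1: "(profile a has_real_derivative \<phi>1 x) (at x within {0..1})" if "x \<in> {0..1}" for x
  proof -
    have "((\<lambda>x. 2 * ln (cosh (a * x)) - 2 * ln (cosh a)) has_real_derivative \<phi>1 x) (at x)"
      unfolding \<phi>1_def by (auto intro!: derivative_eq_intros)
    then show ?thesis
      by (rule has_field_derivative_transform_within[OF has_field_derivative_at_within zero_less_one])
        (use that in \<open>auto simp: profile_def\<close>)
  qed
  have d2: "(\<phi>1 has_real_derivative \<phi>2 x) (at x within {0..1})" for x
  proof -
    have "(\<phi>1 has_real_derivative (cosh (a * x) * a * (2 * a) * cosh (a * x)
        - 2 * a * sinh (a * x) * (sinh (a * x) * a)) / (cosh (a * x) * cosh (a * x))) (at x)"
      unfolding \<phi>1_def[abs_def] by (auto intro!: derivative_eq_intros)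
    moreover have "(cosh (a * x) * a * (2 * a) * cosh (a * x)
        - 2 * a * sinh (a * x) * (sinh (a * x) * a)) / (cosh (a * x) * cosh (a * x)) = \<phi>2 x"
      unfolding \<phi>2_def using cosh_square_eq[of "a * x"] by (simp add: power2_eq_square algebra_simps)
    ultimately show ?thesis by (simp add: has_field_derivative_at_within)
  qed
  have "sqrt (\<delta> / 2) ^ 2 = (a / cosh a) ^ 2" using assms(2) unfolding shoot_def by simp
  then have "\<delta> = 2 * a ^ 2 / cosh a ^ 2"
    using assms(1) by (simp add: power_divide field_simps)
  then have "\<phi>2 x - \<delta> * exp (- profile a x) = 0" if "x \<in> {0<..<1}" for x
    using that by (simp add: \<phi>2_def profile_def exp_diff exp_double)
  moreover have "continuous_on {0..1} \<phi>2"
    unfolding \<phi>2_def by (auto intro!: continuous_intros)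
  ultimately have "is_solution \<delta> (profile a)"
    unfolding is_solution_def using d1 d2
    by (intro exI[of _ \<phi>1] exI[of _ \<phi>2] conjI) (auto simp: \<phi>1_def profile_def)
  then show ?thesis unfolding solutions_def profile_def by auto
qed

lemma solution_is_profile:
  assumes "\<delta> > 0" "\<phi> \<in> solutions \<delta>"
  shows "\<exists>a>0. shoot a = sqrt (\<delta> / 2) \<and> \<phi> = profile a"
proof -
  have sol: "is_solution \<delta> \<phi>" and out: "\<And>x. x \<notin> {0..1} \<Longrightarrow> \<phi> x = 0"
    using assms(2) unfolding solutions_def by auto
  define t where "t = exp (- \<phi> 0 / 2)"
  define a where "a = sqrt (\<delta> / 2) * t"
  have "t > 0" "a > 0" unfolding a_def t_def using assms(1) by auto
  have t: "t = cosh a"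
    using solution_closed_form(2)[OF assms(1) sol] unfolding a_def t_def .
  then have "shoot a = sqrt (\<delta> / 2)"
    unfolding shoot_def a_def using \<open>t > 0\<close> by simp
  have "ln t = - \<phi> 0 / 2" unfolding t_def by simp
  with t have \<phi>0: "\<phi> 0 = - 2 * ln (cosh a)" by simp
  have closed: "\<phi> x = \<phi> 0 + 2 * ln (cosh (a * x))" if "x \<in> {0..1}" for x
    using bspec[OF solution_closed_form(1)[OF assms(1) sol] that] unfolding a_def t_def .
  have "\<phi> x = profile a x" for x
    using closed[of x] \<phi>0 out[of x] by (cases "x \<in> {0..1}") (simp_all add: profile_def)
  with \<open>shoot a = sqrt (\<delta> / 2)\<close> \<open>a > 0\<close> show ?thesis by blast
qed

lemma inj_on_profile: "inj_on profile {0<..}"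
proof (rule inj_onI)
  fix a b :: real assume "a \<in> {0<..}" "b \<in> {0<..}" "profile a = profile b"
  then have "profile a 0 = profile b 0" by simp
  then have "cosh a = cosh b" by (simp add: profile_def)
  then show "a = b" using \<open>a \<in> {0<..}\<close> \<open>b \<in> {0<..}\<close> by simp
qed

lemma card_solutions:
  assumes "\<delta> > 0"
  shows "card (solutions \<delta>) = card {a. a > 0 \<and> shoot a = sqrt (\<delta> / 2)}"
proof -
  have "solutions \<delta> = profile ` {a. a > 0 \<and> shoot a = sqrt (\<delta> / 2)}"
  proof
    show "solutions \<delta> \<subseteq> profile ` {a. a > 0 \<and> shoot a = sqrt (\<delta> / 2)}"
      using solution_is_profile[OF assms] by blast
    show "profile ` {a. a > 0 \<and> shoot a = sqrt (\<delta> / 2)} \<subseteq> solutions \<delta>"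
      using profile_in_solutions[OF assms] by blast
  qed
  moreover have "inj_on profile {a. a > 0 \<and> shoot a = sqrt (\<delta> / 2)}"
    using inj_on_profile by (rule inj_on_subset) auto
  ultimately show ?thesis by (simp add: card_image)
qed

theorem mainTheorem1:
  fixes \<delta> :: real
  assumes "\<delta> > 0"
  shows "(\<exists>!d::real. d > 0 \<and> 1 = sqrt (d / 2) * sinh (sqrt ((d + 2) / 2)))
    \<and> (\<delta> < delta_c \<longrightarrow> card (solutions \<delta>) = 2)
    \<and> (\<delta> = delta_c \<longrightarrow> card (solutions \<delta>) = 1)
    \<and> (\<delta> > delta_c \<longrightarrow> solutions \<delta> = {})
    \<and> (\<forall>\<phi>\<in>solutions \<delta>.
         (\<forall>x\<in>{0..1}. \<phi> x = \<phi> 0 + 2 * ln (cosh (sqrt (\<delta> / 2) * exp (- \<phi> 0 / 2) * x)))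
         \<and> exp (- \<phi> 0 / 2) = cosh (sqrt (\<delta> / 2) * exp (- \<phi> 0 / 2)))"
proof (intro conjI impI)
  show "\<exists>!d::real. d > 0 \<and> 1 = sqrt (d / 2) * sinh (sqrt ((d + 2) / 2))"
    unfolding delta_c_equation_iff by blast
  have "sqrt (\<delta> / 2) > 0" using assms by simp
  show "card (solutions \<delta>) = 2" if "\<delta> < delta_c"
    using card_solutions[OF assms] shoot_level_set_below_max \<open>sqrt (\<delta> / 2) > 0\<close> that
    by (simp add: shoot_max)
  show "card (solutions \<delta>) = 1" if "\<delta> = delta_c"
    using card_solutions[OF assms] shoot_level_set_max that by (simp add: shoot_max)
  show "solutions \<delta> = {}" if "\<delta> > delta_c"
  proof (rule equals0I)
    fix \<phi> assume "\<phi> \<in> solutions \<delta>"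
    then obtain a where "a > 0" "shoot a = sqrt (\<delta> / 2)"
      using solution_is_profile[OF assms] by blast
    moreover have "shoot a_crit < sqrt (\<delta> / 2)" using that by (simp add: shoot_max)
    ultimately show False using shoot_level_set_above_max by blast
  qed
  show "\<forall>\<phi>\<in>solutions \<delta>.
      (\<forall>x\<in>{0..1}. \<phi> x = \<phi> 0 + 2 * ln (cosh (sqrt (\<delta> / 2) * exp (- \<phi> 0 / 2) * x)))
      \<and> exp (- \<phi> 0 / 2) = cosh (sqrt (\<delta> / 2) * exp (- \<phi> 0 / 2))"
    using solution_closed_form[OF assms] unfolding solutions_def by blast
qed

end
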